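(* For every reduced two-rowed array ${\boldsymbol{\mathsf X}}$ (i.e. $\min\{{\sf x}_{k+1},{\sf y}_k\}\le 1$ for all $k$), $\mathcal F(\tilde f{\boldsymbol{\mathsf X}})=\tilde f\,\mathcal F({\boldsymbol{\mathsf X}})$, where $\mathcal F(0)=0$ by convention.
   Context: A two-rowed array is a family ${\boldsymbol{\mathsf X}}=({\sf x}_k;{\sf y}_k)_{k\in\mathbb Z}$ of non-negative integers with ${\sf x}_k={\sf y}_k=0$ for all but finitely many $k$; sums and differences are componentwise. ${\boldsymbol{\mathsf x}}_k(a)$ (resp. ${\boldsymbol{\mathsf y}}_k(a)$) is the array with ${\sf x}_k=a$ (resp. ${\sf y}_k=a$) and all other entries $0$. For $z\in\mathbb Z_{\ge0}$ write $z=2\,\mathrm{quo}(z)+\mathrm{rem}(z)$ with $\mathrm{rem}(z)\in\{0,1\}$. The map $\mathcal F$: given ${\boldsymbol{\mathsf X}}=({\sf x}_k;{\sf y}_k)$, put for all $k\in\mathbb Z$: ${\sf y}'_k=\mathrm{rem}({\sf y}_k)+2\,\mathrm{quo}({\sf y}_{k-1})$; ${\sf z}_k=\min\{{\sf x}_k,{\sf y}'_k\}$; ${\sf X}_k={\sf x}_k-{\sf z}_k+{\sf z}_{k-1}$; $\widetilde{\sf Y}_k={\sf y}'_k-{\sf z}_k+{\sf z}_{k-1}$; $\widetilde{\sf X}_k=\mathrm{rem}({\sf X}_k)+2\,\mathrm{quo}({\sf X}_{k-1})$; and $\mathcal F({\boldsymbol{\mathsf X}})=(\widetilde{\sf X}_k;\widetilde{\sf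 Y}_k)_{k\in\mathbb Z}$. Signature rule: the signature of ${\boldsymbol{\mathsf X}}$ is the finite sequence $\sigma({\boldsymbol{\mathsf X}})=(\cdots\,-^{{\sf y}_{k+1}}\,+^{{\sf x}_{k+1}}\,-^{{\sf y}_k}\,+^{{\sf x}_k}\,-^{{\sf y}_{k-1}}\,+^{{\sf x}_{k-1}}\cdots)$ (read left to right with $k$ decreasing; superscripts are multiplicities). Repeatedly cancel a pair $(+,-)$ in which the $+$ is to the left of the $-$ with only canceled symbols between them, until the reduced signature $\overline\sigma({\boldsymbol{\mathsf X}})$ has the form $(-\cdots-+\cdots+)$. If the leftmost $+$ of $\overline\sigma({\boldsymbol{\mathsf X}})$ comes from $+^{{\sf x}_k}$, then $\tilde f{\boldsymbol{\mathsf X}}={\boldsymbol{\mathsf X}}-{\boldsymbol{\mathsf x}}_k(1)+{\boldsymbol{\mathsf y}}_k(1)$; if $\overline\sigma({\boldsymbol{\mathsf X}})$ has no $+$, then $\tilde f{\boldsymbol{\mathsf X}}=0$. *)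

theory Defs
  imports Main
begin

text \<open>A two-rowed array (x_k; y_k)_{k in Z}: a pair of functions int => nat
  (first row x, second row y); the finite-support condition is a separate predicate.\<close>
type_synonym array2 = "(int \<Rightarrow> nat) \<times> (int \<Rightarrow> nat)"

definition arr_supp :: "array2 \<Rightarrow> int set" where
  "arr_supp X = {k. fst X k \<noteq> 0 \<or> snd X k \<noteq> 0}"

definition two_rowed :: "array2 \<Rightarrow> bool" where
  "two_rowed X \<longleftrightarrow> finite (arr_supp X)"

definition reduced_array :: "array2 \<Rightarrow> bool" where
  "reduced_array X \<longleftrightarrow> (\<forall>k. min (fst X (k + 1)) (snd X k) \<le> 1)"

definition quo :: "nat \<Rightarrow> nat" where "quo z = z div 2"
definition rem :: "nat \<Rightarrow> nat" where "rem z = z mod 2"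

definition Fmap :: "array2 \<Rightarrow> array2" where
  "Fmap X = (let x = fst X; y = snd X;
       y' = (\<lambda>k. rem (y k) + 2 * quo (y (k - 1)));
       z = (\<lambda>k. min (x k) (y' k));
       XX = (\<lambda>k. x k - z k + z (k - 1));
       Yt = (\<lambda>k. y' k - z k + z (k - 1));
       Xt = (\<lambda>k. rem (XX k) + 2 * quo (XX (k - 1)))
     in (Xt, Yt))"

text \<open>Signature: a list of symbols (True = +, False = -) tagged with the index k
  they come from, read with k decreasing; for each k: -^{y_k} then +^{x_k}.\<close>
definition signature :: "array2 \<Rightarrow> (bool \<times> int) list" where
  "signature X = concat (map (\<lambda>k. replicate (snd X k) (False, k) @ replicate (fst X k) (True, k))
                          (rev (sorted_list_of_set (arr_supp X))))"

text \<open>Cancellation of (+,-) pairs (+ left of -, only cancelled symbols between),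
  carried out by the standard left-to-right stack procedure; st is the reversed
  list of uncancelled symbols read so far.\<close>
fun cancel_aux :: "(bool \<times> int) list \<Rightarrow> (bool \<times> int) list \<Rightarrow> (bool \<times> int) list" where
  "cancel_aux st [] = rev st"
| "cancel_aux st (s # ss) =
     (if \<not> fst s \<and> st \<noteq> [] \<and> fst (hd st) then cancel_aux (tl st) ss else cancel_aux (s # st) ss)"

definition reduced_signature :: "array2 \<Rightarrow> (bool \<times> int) list" where
  "reduced_signature X = cancel_aux [] (signature X)"

text \<open>Kashiwara operator f~; None represents 0.\<close>
definition ftilde :: "array2 \<Rightarrow> array2 option" where
  "ftilde X = (case find fst (reduced_signature X) of
       None \<Rightarrow> None
     | Some (_, k) \<Rightarrow> Some ((fst X)(k := fst X k - 1), (snd X)(k := snd X k + 1)))"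

end

theory Submission
  imports Defs
begin

text \<open>Put P(k) = (sum of x_i - y_i over i < k) + x_k. Cancelling with a stack while
  reading the signature from the left, the surviving + symbols number max P (if positive),
  and the leftmost of them in the reduced signature comes from the least maximiser b of P;
  so f~ acts at b when max P > 0 and gives 0 otherwise.
  Up to a correction in {-1, 0, 1}, the potential of F X is that of X shifted by one index,
  and the correction is small enough to give P_FX(k) <= max (P(k-2)) (P(k-1)) (P(k)).
  This settles the case f~ X = 0. Otherwise a case analysis on the parities of y_b and
  y_(b+1) shows that F (f~ X) is F X with one box moved at b, b+1 or b+2, and that this
  index is the least maximiser of P_FX, with the same maximal value.\<close>

definition sig_block :: "array2 \<Rightarrow> int \<Rightarrow> (bool \<times> int) list" where
  "sig_block X k = replicate (snd X k) (False, k) @ replicate (fst X k) (True, k)"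

fun cancel_stack :: "(bool \<times> int) list \<Rightarrow> (bool \<times> int) list \<Rightarrow> (bool \<times> int) list" where
  "cancel_stack st [] = st"
| "cancel_stack st (s # ss) =
     cancel_stack (if \<not> fst s \<and> st \<noteq> [] \<and> fst (hd st) then tl st else s # st) ss"

lemma cancel_aux_eq_rev_cancel_stack: "cancel_aux st w = rev (cancel_stack st w)"
  by (induction st w rule: cancel_aux.induct) auto

lemma cancel_stack_append: "cancel_stack st (u @ v) = cancel_stack (cancel_stack st u) v"
  by (induction u arbitrary: st) auto

lemma cancel_stack_replicate_plus:
  "cancel_stack st (replicate n (True, k)) = replicate n (True, k) @ st"
  by (induction n arbitrary: st) (auto simp: replicate_app_Cons_same)

lemma cancel_stack_replicate_minus:
  assumes "\<forall>p\<in>set ps. fst p" "\<forall>m\<in>set ms. \<not> fst m"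
  shows "cancel_stack (ps @ ms) (replicate n (False, k))
           = drop n ps @ replicate (n - length ps) (False, k) @ ms"
  using assms
proof (induction n arbitrary: ps ms)
  case 0
  then show ?case by simp
next
  case (Suc n)
  show ?case
  proof (cases ps)
    case Nil
    have "cancel_stack (ps @ ms) (replicate (Suc n) (False, k))
            = cancel_stack ([] @ (False, k) # ms) (replicate n (False, k))"
      using Nil Suc.prems by (cases ms) auto
    also have "\<dots> = replicate n (False, k) @ (False, k) # ms"
      using Suc.IH[of "[]" "(False, k) # ms"] Suc.prems by simp
    finally show ?thesis using Nil by (simp add: replicate_app_Cons_same)
  next
    case (Cons p ps')
    then show ?thesis using Suc.IH[of ps' ms] Suc.prems by auto
  qed
qed

lemma cancel_stack_sig_block:
  assumes "\<forall>p\<in>set ps. fst p" "\<forall>m\<in>set ms. \<not> fst m"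
  shows "cancel_stack (ps @ ms) (sig_block X k)
           = (replicate (fst X k) (True, k) @ drop (snd X k) ps)
             @ (replicate (snd X k - length ps) (False, k) @ ms)"
  unfolding sig_block_def cancel_stack_append
  using cancel_stack_replicate_minus[OF assms] cancel_stack_replicate_plus by simp

definition vanishes_below :: "int \<Rightarrow> array2 \<Rightarrow> bool" where
  "vanishes_below lo X \<longleftrightarrow> (\<forall>i<lo. fst X i = 0 \<and> snd X i = 0)"

definition vanishes_above :: "int \<Rightarrow> array2 \<Rightarrow> bool" where
  "vanishes_above hi X \<longleftrightarrow> (\<forall>i>hi. fst X i = 0 \<and> snd X i = 0)"

lemma arr_supp_subset_if_vanishes:
  assumes "vanishes_below lo X" "vanishes_above hi X"
  shows "arr_supp X \<subseteq> {lo..hi}"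
proof
  fix k assume "k \<in> arr_supp X"
  then have "\<not> k < lo" "\<not> hi < k"
    using assms unfolding arr_supp_def vanishes_below_def vanishes_above_def by auto
  then show "k \<in> {lo..hi}" by simp
qed

lemma two_rowed_if_vanishes:
  "vanishes_below lo X \<Longrightarrow> vanishes_above hi X \<Longrightarrow> two_rowed X"
  unfolding two_rowed_def
  by (meson arr_supp_subset_if_vanishes finite_atLeastAtMost_int finite_subset)

lemma vanishes_below_exists:
  assumes "two_rowed X"
  obtains lo where "vanishes_below lo X"
proof
  have fin: "finite (insert 0 (arr_supp X))" using assms unfolding two_rowed_def by simp
  show "vanishes_below (Min (insert 0 (arr_supp X))) X"
    unfolding vanishes_below_def
  proof (intro allI impI)
    fix i assume "i < Min (insert 0 (arr_supp X))"
    then have "i \<notin> arr_supp X" using fin Min_le by (metis insertCI not_le)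
    then show "fst X i = 0 \<and> snd X i = 0" unfolding arr_supp_def by simp
  qed
qed

lemma vanishes_above_exists:
  assumes "two_rowed X"
  obtains hi where "lo \<le> hi" "vanishes_above hi X"
proof
  have fin: "finite (insert lo (arr_supp X))" using assms unfolding two_rowed_def by simp
  then show "lo \<le> Max (insert lo (arr_supp X))" by simp
  show "vanishes_above (Max (insert lo (arr_supp X))) X"
    unfolding vanishes_above_def
  proof (intro allI impI)
    fix i assume "Max (insert lo (arr_supp X)) < i"
    then have "i \<notin> arr_supp X" using fin Max_ge by (metis insertCI not_le)
    then show "fst X i = 0 \<and> snd X i = 0" unfolding arr_supp_def by simp
  qed
qed

definition weight :: "int \<Rightarrow> array2 \<Rightarrow> int \<Rightarrow> int" where
  "weight lo X k = (\<Sum>i\<in>{lo..<k}. int (fst X i) - int (snd X i))"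

definition potential :: "int \<Rightarrow> array2 \<Rightarrow> int \<Rightarrow> int" where
  "potential lo X k = weight lo X k + int (fst X k)"

definition least_argmax :: "(int \<Rightarrow> int) \<Rightarrow> int \<Rightarrow> bool" where
  "least_argmax f b \<longleftrightarrow> (\<forall>j<b. f j < f b) \<and> (\<forall>j>b. f j \<le> f b)"

lemma least_argmax_unique: "least_argmax f a \<Longrightarrow> least_argmax f b \<Longrightarrow> a = b"
  unfolding least_argmax_def by (metis linorder_neqE not_le)

lemma weight_succ:
  assumes "vanishes_below lo X"
  shows "weight lo X (k + 1) = weight lo X k + int (fst X k) - int (snd X k)"
proof (cases "lo \<le> k")
  case True
  then have "{lo..<k + 1} = insert k {lo..<k}" by auto
  then show ?thesis unfolding weight_def by simp
next
  case False
  then show ?thesis using assms unfolding weight_def vanishes_below_def by simp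
qed

lemma potential_succ:
  "vanishes_below lo X \<Longrightarrow>
     potential lo X (k + 1) = potential lo X k + int (fst X (k + 1)) - int (snd X k)"
  using weight_succ[of lo X k] unfolding potential_def by simp

lemma potential_below: "vanishes_below lo X \<Longrightarrow> k < lo \<Longrightarrow> potential lo X k = 0"
  unfolding potential_def weight_def vanishes_below_def by simp

lemma potential_above_le:
  assumes lo: "vanishes_below lo X" and hi: "vanishes_above hi X" and "hi < j"
  shows "potential lo X j \<le> potential lo X hi"
proof -
  have "hi + 1 \<le> j" using \<open>hi < j\<close> by simp
  then have "weight lo X j = weight lo X (hi + 1)"
  proof (induction j rule: int_ge_induct)
    case (step i)
    then show ?case using weight_succ[OF lo, of i] hi unfolding vanishes_above_def by simp
  qed simp
  then show ?thesis
    using weight_succ[OF lo, of hi] hi \<open>hi < j\<close> unfolding potential_def vanishes_above_def by simp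
qed

lemma potential_le_if_le_on_interval:
  assumes "vanishes_below lo X" "vanishes_above hi X" "lo \<le> hi" "0 \<le> M"
    and "\<forall>j\<in>{lo..hi}. potential lo X j \<le> M"
  shows "potential lo X j \<le> M"
proof -
  consider "j < lo" | "j \<in> {lo..hi}" | "hi < j" by fastforce
  then show ?thesis
  proof cases
    case 3
    then have "potential lo X j \<le> potential lo X hi" using potential_above_le assms(1,2) by blast
    also have "\<dots> \<le> M" using assms(3,5) by simp
    finally show ?thesis .
  qed (use assms potential_below in auto)
qed

lemma potential_pos_if_least_argmax:
  assumes "vanishes_below lo X" "least_argmax (potential lo X) b"
  shows "0 < potential lo X b"
proof -
  let ?j = "min b lo - 1"
  have "potential lo X ?j < potential lo X b" using assms(2) unfolding least_argmax_def by simp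
  moreover have "potential lo X ?j = 0" using potential_below[OF assms(1)] by simp
  ultimately show ?thesis by simp
qed

text \<open>The + symbols on the stack (top first) after reading the signature blocks of the
  indices hi, hi - 1, ..., k: the bottom one comes from the least maximiser of the potential
  on {k..hi}, and their number is the excess of that maximum over the weight at k.\<close>

definition plus_stack_inv :: "int \<Rightarrow> array2 \<Rightarrow> int \<Rightarrow> int \<Rightarrow> (bool \<times> int) list \<Rightarrow> bool" where
  "plus_stack_inv lo X hi k ps \<longleftrightarrow> (\<forall>p\<in>set ps. fst p)
     \<and> (\<forall>j\<in>{k..hi}. potential lo X j \<le> weight lo X k + int (length ps))
     \<and> (ps \<noteq> [] \<longrightarrow> (\<exists>b\<in>{k..hi}. last ps = (True, b)
            \<and> potential lo X b = weight lo X k + int (length ps)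
            \<and> (\<forall>j\<in>{k..<b}. potential lo X j < potential lo X b)))"

lemma plus_stack_inv_bottom_step:
  assumes lo: "vanishes_below lo X" and inv: "plus_stack_inv lo X hi k ps" and "k \<le> hi"
  defines "ps' \<equiv> replicate (fst X (k - 1)) (True, k - 1) @ drop (snd X (k - 1)) ps"
  assumes "ps' \<noteq> []"
  shows "\<exists>b\<in>{k - 1..hi}. last ps' = (True, b)
           \<and> potential lo X b = weight lo X (k - 1) + int (length ps')
           \<and> (\<forall>j\<in>{k - 1..<b}. potential lo X j < potential lo X b)"
proof -
  have wk: "weight lo X k = weight lo X (k - 1) + int (fst X (k - 1)) - int (snd X (k - 1))"
    using weight_succ[OF lo, of "k - 1"] by simp
  have pk: "potential lo X (k - 1) = weight lo X (k - 1) + int (fst X (k - 1))"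
    unfolding potential_def by simp
  show ?thesis
  proof (cases "snd X (k - 1) < length ps")
    case True
    then obtain b where b: "b \<in> {k..hi}" "last ps = (True, b)"
      "potential lo X b = weight lo X k + int (length ps)"
      "\<forall>j\<in>{k..<b}. potential lo X j < potential lo X b"
      using inv unfolding plus_stack_inv_def by fastforce
    have "last ps' = last ps" unfolding ps'_def using True by (simp add: last_drop)
    moreover have "potential lo X b = weight lo X (k - 1) + int (length ps')"
      using b(3) wk True unfolding ps'_def by simp
    moreover have "\<forall>j\<in>{k - 1..<b}. potential lo X j < potential lo X b"
    proof
      fix j assume "j \<in> {k - 1..<b}"
      then consider "j = k - 1" | "j \<in> {k..<b}" by fastforce
      then show "potential lo X j < potential lo X b"
        by cases (use pk b(3,4) wk True in auto)
    qed
    ultimately show ?thesis using b(1,2) by auto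
  next
    case False
    then have "ps' = replicate (fst X (k - 1)) (True, k - 1)" unfolding ps'_def by simp
    then show ?thesis using \<open>ps' \<noteq> []\<close> pk \<open>k \<le> hi\<close> by auto
  qed
qed

lemma plus_stack_inv_step:
  assumes lo: "vanishes_below lo X" and inv: "plus_stack_inv lo X hi k ps" and "k \<le> hi"
  shows "plus_stack_inv lo X hi (k - 1)
           (replicate (fst X (k - 1)) (True, k - 1) @ drop (snd X (k - 1)) ps)"
    (is "plus_stack_inv lo X hi (k - 1) ?ps'")
proof -
  have ps: "\<forall>p\<in>set ps. fst p"
    and le: "\<forall>j\<in>{k..hi}. potential lo X j \<le> weight lo X k + int (length ps)"
    using inv unfolding plus_stack_inv_def by blast+
  have wk: "weight lo X k = weight lo X (k - 1) + int (fst X (k - 1)) - int (snd X (k - 1))"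
    using weight_succ[OF lo, of "k - 1"] by simp
  have pk: "potential lo X (k - 1) = weight lo X (k - 1) + int (fst X (k - 1))"
    unfolding potential_def by simp
  have len: "length ?ps' = fst X (k - 1) + (length ps - snd X (k - 1))" by simp
  have "\<forall>p\<in>set ?ps'. fst p" using ps by (auto dest: in_set_dropD)
  moreover have "\<forall>j\<in>{k - 1..hi}. potential lo X j \<le> weight lo X (k - 1) + int (length ?ps')"
  proof
    fix j assume "j \<in> {k - 1..hi}"
    then consider "j = k - 1" | "j \<in> {k..hi}" by fastforce
    then show "potential lo X j \<le> weight lo X (k - 1) + int (length ?ps')"
      by cases (use pk len le wk in fastforce)+
  qed
  ultimately show ?thesis
    unfolding plus_stack_inv_def using plus_stack_inv_bottom_step[OF lo inv \<open>k \<le> hi\<close>] by blast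
qed

lemma cancel_stack_blocks:
  assumes lo: "vanishes_below lo X" and "k \<le> hi"
  shows "\<exists>ps ms. cancel_stack [] (concat (map (sig_block X) (rev [k..hi]))) = ps @ ms
           \<and> (\<forall>m\<in>set ms. \<not> fst m) \<and> plus_stack_inv lo X hi k ps"
  using assms(2)
proof (induction k rule: int_le_induct)
  case base
  let ?ps = "replicate (fst X hi) (True, hi)" and ?ms = "replicate (snd X hi) (False, hi)"
  have "cancel_stack [] (concat (map (sig_block X) (rev [hi..hi]))) = ?ps @ ?ms"
    using cancel_stack_sig_block[of "[]" "[]" X hi] by simp
  moreover have "plus_stack_inv lo X hi hi ?ps"
    unfolding plus_stack_inv_def potential_def by auto
  moreover have "\<forall>m\<in>set ?ms. \<not> fst m" by simp
  ultimately show ?case by blast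
next
  case (step i)
  then obtain ps ms where st: "cancel_stack [] (concat (map (sig_block X) (rev [i..hi]))) = ps @ ms"
    and ms: "\<forall>m\<in>set ms. \<not> fst m" and inv: "plus_stack_inv lo X hi i ps" by blast
  have ps: "\<forall>p\<in>set ps. fst p" using inv unfolding plus_stack_inv_def by blast
  let ?ps' = "replicate (fst X (i - 1)) (True, i - 1) @ drop (snd X (i - 1)) ps"
  let ?ms' = "replicate (snd X (i - 1) - length ps) (False, i - 1) @ ms"
  have "[i - 1..hi] = (i - 1) # [i..hi]" using upto_rec1[of "i - 1" hi] step(1) by simp
  then have "cancel_stack [] (concat (map (sig_block X) (rev [i - 1..hi])))
      = cancel_stack (ps @ ms) (sig_block X (i - 1))"
    using st by (simp add: cancel_stack_append)
  also have "\<dots> = ?ps' @ ?ms'"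
    using cancel_stack_sig_block[OF ps ms] by simp
  finally have "cancel_stack [] (concat (map (sig_block X) (rev [i - 1..hi]))) = ?ps' @ ?ms'" .
  moreover have "\<forall>m\<in>set ?ms'. \<not> fst m" using ms by auto
  ultimately show ?case using plus_stack_inv_step[OF lo inv step(1)] by blast
qed

lemma signature_eq_blocks:
  assumes "vanishes_below lo X" and "vanishes_above hi X"
  shows "signature X = concat (map (sig_block X) (rev [lo..hi]))"
proof -
  let ?P = "\<lambda>k. k \<in> arr_supp X"
  have "arr_supp X = set (filter ?P [lo..hi])"
    using arr_supp_subset_if_vanishes[OF assms] by auto
  then have "sorted_list_of_set (arr_supp X) = sort (remdups (filter ?P [lo..hi]))"
    by (metis sorted_list_of_set_sort_remdups)
  also have "\<dots> = filter ?P [lo..hi]"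
    by (simp add: distinct_remdups_id) (metis sorted_sort_id sorted_upto sorted_wrt_filter)
  finally have "signature X = concat (map (sig_block X) (filter ?P (rev [lo..hi])))"
    unfolding signature_def sig_block_def by (simp add: rev_filter)
  also have "\<dots> = concat (map (sig_block X) (rev [lo..hi]))"
  proof -
    have "concat (map (sig_block X) (filter ?P xs)) = concat (map (sig_block X) xs)" for xs
      by (induction xs) (auto simp: sig_block_def arr_supp_def)
    then show ?thesis .
  qed
  finally show ?thesis .
qed

definition f_at :: "array2 \<Rightarrow> int \<Rightarrow> array2" where
  "f_at X b = ((fst X)(b := fst X b - 1), (snd X)(b := snd X b + 1))"

lemma find_append:
  "find P (xs @ ys) = (case find P xs of None \<Rightarrow> find P ys | Some x \<Rightarrow> Some x)"
  by (induction xs) auto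

lemma ftilde_eq_bottom_plus:
  assumes st: "cancel_stack [] (signature X) = ps @ ms"
    and ps: "\<forall>p\<in>set ps. fst p" and ms: "\<forall>m\<in>set ms. \<not> fst m"
  shows "ftilde X = (if ps = [] then None else Some (f_at X (snd (last ps))))"
proof -
  have "reduced_signature X = rev ms @ rev ps"
    unfolding reduced_signature_def cancel_aux_eq_rev_cancel_stack st by simp
  moreover have "find fst (rev ms) = None" using ms by (metis find_None_iff set_rev)
  moreover have "find fst (rev ps) = (if ps = [] then None else Some (last ps))"
    using ps by (cases ps rule: rev_cases) auto
  ultimately show ?thesis
    using ps by (auto simp: ftilde_def find_append f_at_def split: prod.split)
qed

lemma ftilde_cases_potential:
  assumes fin: "two_rowed X" and lo: "vanishes_below lo X"
  shows "(\<exists>b. least_argmax (potential lo X) b \<and> ftilde X = Some (f_at X b))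
         \<or> (ftilde X = None \<and> (\<forall>j. potential lo X j \<le> 0))"
proof -
  obtain hi where "lo \<le> hi" and hi: "vanishes_above hi X" using vanishes_above_exists[OF fin] .
  then obtain ps ms where st: "cancel_stack [] (signature X) = ps @ ms"
    and ms: "\<forall>m\<in>set ms. \<not> fst m" and inv: "plus_stack_inv lo X hi lo ps"
    using cancel_stack_blocks[OF lo] unfolding signature_eq_blocks[OF lo hi] by blast
  have ps: "\<forall>p\<in>set ps. fst p"
    and le: "\<forall>j\<in>{lo..hi}. potential lo X j \<le> int (length ps)"
    and lst: "ps \<noteq> [] \<longrightarrow> (\<exists>b\<in>{lo..hi}. last ps = (True, b)
            \<and> potential lo X b = int (length ps)
            \<and> (\<forall>j\<in>{lo..<b}. potential lo X j < potential lo X b))"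
    using inv unfolding plus_stack_inv_def weight_def by simp_all
  note ftilde = ftilde_eq_bottom_plus[OF st ps ms]
  show ?thesis
  proof (cases "ps = []")
    case True
    then have "ftilde X = None" using ftilde by simp
    moreover have "potential lo X j \<le> 0" for j
      using potential_le_if_le_on_interval[OF lo hi \<open>lo \<le> hi\<close>] le True by simp
    ultimately show ?thesis by (intro disjI2 conjI allI)
  next
    case False
    then obtain b where b: "b \<in> {lo..hi}" "last ps = (True, b)"
      "potential lo X b = int (length ps)"
      "\<forall>j\<in>{lo..<b}. potential lo X j < potential lo X b" using lst by blast
    have "ftilde X = Some (f_at X b)" using ftilde False b(2) by simp
    moreover have "least_argmax (potential lo X) b"
      unfolding least_argmax_def
    proof (intro conjI allI impI)
      fix j assume "j < b"
      then show "potential lo X j < potential lo X b"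
        using b potential_below[OF lo, of j] False by (cases "j < lo") auto
    next
      fix j assume "b < j"
      show "potential lo X j \<le> potential lo X b"
        using potential_le_if_le_on_interval[OF lo hi \<open>lo \<le> hi\<close>] le b(3) by simp
    qed
    ultimately show ?thesis by blast
  qed
qed

lemma ftilde_eq_Some_if_least_argmax:
  assumes "two_rowed X" "vanishes_below lo X" "least_argmax (potential lo X) b"
  shows "ftilde X = Some (f_at X b)"
  using ftilde_cases_potential[OF assms(1,2)]
proof
  assume "\<exists>b'. least_argmax (potential lo X) b' \<and> ftilde X = Some (f_at X b')"
  then show ?thesis using least_argmax_unique[OF assms(3)] by blast
next
  assume "ftilde X = None \<and> (\<forall>j. potential lo X j \<le> 0)"
  then have "potential lo X b \<le> 0" by blast
  then show ?thesis using potential_pos_if_least_argmax[OF assms(2,3)] by simp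
qed

lemma ftilde_eq_None_if_nonpos:
  assumes "two_rowed X" "vanishes_below lo X" "\<forall>j. potential lo X j \<le> 0"
  shows "ftilde X = None"
  using ftilde_cases_potential[OF assms(1,2)]
proof
  assume "\<exists>b. least_argmax (potential lo X) b \<and> ftilde X = Some (f_at X b)"
  then obtain b where "least_argmax (potential lo X) b" by blast
  then have "0 < potential lo X b" using potential_pos_if_least_argmax[OF assms(2)] by blast
  then show ?thesis using assms(3) by (simp add: not_le[symmetric])
qed simp

text \<open>y_shift, z_match and x_transfer are the intermediate arrays y', z and X in the
  definition of F.\<close>

definition y_shift :: "array2 \<Rightarrow> int \<Rightarrow> nat" where
  "y_shift X k = snd X k mod 2 + 2 * (snd X (k - 1) div 2)"

definition z_match :: "array2 \<Rightarrow> int \<Rightarrow> nat" where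
  "z_match X k = min (fst X k) (y_shift X k)"

definition x_transfer :: "array2 \<Rightarrow> int \<Rightarrow> nat" where
  "x_transfer X k = fst X k - z_match X k + z_match X (k - 1)"

definition pot_correction :: "array2 \<Rightarrow> int \<Rightarrow> int" where
  "pot_correction X k = int (x_transfer X k mod 2) - int (snd X (k - 1) mod 2)"

lemma Fmap_fst: "fst (Fmap X) k = x_transfer X k mod 2 + 2 * (x_transfer X (k - 1) div 2)"
  and Fmap_snd: "snd (Fmap X) k = y_shift X k - z_match X k + z_match X (k - 1)"
  by (simp_all add: Fmap_def Let_def rem_def quo_def x_transfer_def z_match_def y_shift_def)

lemma vanishes_below_Fmap:
  assumes "vanishes_below lo X"
  shows "vanishes_below lo (Fmap X)"
proof -
  have "x_transfer X i = 0" "z_match X i = 0" "y_shift X i = 0" if "i < lo" for i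
    using assms that unfolding vanishes_below_def x_transfer_def z_match_def y_shift_def by auto
  then show ?thesis unfolding vanishes_below_def Fmap_fst Fmap_snd by simp
qed

lemma vanishes_above_Fmap:
  assumes "vanishes_above hi X"
  shows "vanishes_above (hi + 3) (Fmap X)"
proof -
  have z: "z_match X m = 0" if "hi < m" for m
    using assms that unfolding vanishes_above_def z_match_def by simp
  have "x_transfer X m = 0" "y_shift X m = 0" if "hi + 1 < m" for m
    using assms that z[of m] z[of "m - 1"] unfolding vanishes_above_def x_transfer_def y_shift_def
    by simp_all
  then show ?thesis unfolding vanishes_above_def Fmap_fst Fmap_snd using z by simp
qed

lemma two_rowed_Fmap:
  assumes "two_rowed X"
  shows "two_rowed (Fmap X)"
proof -
  obtain lo where "vanishes_below lo X" using vanishes_below_exists[OF assms] .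
  moreover obtain hi where "vanishes_above hi X" using vanishes_above_exists[OF assms] .
  ultimately show ?thesis
    using two_rowed_if_vanishes vanishes_below_Fmap vanishes_above_Fmap by blast
qed

lemma pot_correction_le:
  "pot_correction X j
     \<le> max 0 (max (int (fst X j) - int (snd X (j - 1)))
                    (int (snd X (j - 2)) - int (fst X (j - 1))))"
proof (rule ccontr)
  assume neg: "\<not> ?thesis"
  have "x_transfer X j mod 2 \<le> 1" "snd X (j - 1) mod 2 \<le> 1" by simp_all
  with neg have odd: "x_transfer X j mod 2 = 1" and even: "snd X (j - 1) mod 2 = 0"
    and le: "fst X j \<le> snd X (j - 1)" "snd X (j - 2) \<le> fst X (j - 1)"
    unfolding pot_correction_def by linarith+
  have "fst X j \<le> y_shift X j"
    using le(1) even div_mult_mod_eq[of "snd X (j - 1)" 2] unfolding y_shift_def by linarith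
  then have "z_match X j = fst X j" by (simp add: z_match_def)
  moreover have "z_match X (j - 1) = 2 * (snd X (j - 2) div 2)"
    using even le(2) by (simp add: z_match_def y_shift_def algebra_simps)
  ultimately have "x_transfer X j = 2 * (snd X (j - 2) div 2)" by (simp add: x_transfer_def)
  then show False using odd by simp
qed

lemma Fmap_increment:
  "int (fst (Fmap X) (k + 1)) - int (snd (Fmap X) k)
     = int (fst X k) - int (snd X (k - 1)) + pot_correction X (k + 1) - pot_correction X k"
proof -
  have zx: "z_match X k \<le> fst X k" "z_match X k \<le> y_shift X k" by (simp_all add: z_match_def)
  have "int (x_transfer X k) = int (fst X k) - int (z_match X k) + int (z_match X (k - 1))"
    and "int (snd (Fmap X) k) = int (y_shift X k) - int (z_match X k) + int (z_match X (k - 1))"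
    using zx by (simp_all add: x_transfer_def Fmap_snd of_nat_diff)
  moreover have "int (y_shift X k) = int (snd X k mod 2) + 2 * int (snd X (k - 1) div 2)"
    by (simp add: y_shift_def)
  moreover have "int (fst (Fmap X) (k + 1))
      = int (x_transfer X (k + 1) mod 2) + 2 * int (x_transfer X k div 2)"
    by (simp add: Fmap_fst)
  moreover have "int n = 2 * int (n div 2) + int (n mod 2)" for n
    using div_mult_mod_eq[of n 2] by linarith
  ultimately show ?thesis unfolding pot_correction_def by smt
qed

lemma potential_Fmap:
  assumes lo: "vanishes_below lo X"
  shows "potential lo (Fmap X) k = potential lo X (k - 1) + pot_correction X k"
proof -
  have loF: "vanishes_below lo (Fmap X)" using vanishes_below_Fmap[OF lo] .
  have below: "potential lo (Fmap X) k = potential lo X (k - 1) + pot_correction X k"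
    if "k < lo" for k
    using lo that potential_below[OF loF that] potential_below[OF lo, of "k - 1"]
    unfolding pot_correction_def x_transfer_def z_match_def vanishes_below_def by simp
  show ?thesis
  proof (cases "k < lo")
    case False
    then have "lo - 1 \<le> k" by simp
    then show ?thesis
    proof (induction k rule: int_ge_induct)
      case (step i)
      have "potential lo (Fmap X) (i + 1)
          = potential lo (Fmap X) i + int (fst (Fmap X) (i + 1)) - int (snd (Fmap X) i)"
        using potential_succ[OF loF] .
      also have "\<dots> = potential lo X i + pot_correction X (i + 1)"
        using step.IH Fmap_increment[of X i] potential_succ[OF lo, of "i - 1"] by simp
      finally show ?case by simp
    qed (use below in simp)
  qed (use below in simp)
qed

lemma potential_Fmap_le_max:
  assumes lo: "vanishes_below lo X"
  shows "potential lo (Fmap X) k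
           \<le> max (potential lo X (k - 2)) (max (potential lo X (k - 1)) (potential lo X k))"
proof -
  have "potential lo X k = potential lo X (k - 1) + int (fst X k) - int (snd X (k - 1))"
    using potential_succ[OF lo, of "k - 1"] by simp
  moreover have "potential lo X (k - 1)
      = potential lo X (k - 2) + int (fst X (k - 1)) - int (snd X (k - 2))"
    using potential_succ[OF lo, of "k - 2"] by (simp add: algebra_simps)
  ultimately show ?thesis using potential_Fmap[OF lo, of k] pot_correction_le[of X k] by linarith
qed

lemma f_at_fst: "fst (f_at X b) k = (if k = b then fst X b - 1 else fst X k)"
  and f_at_snd: "snd (f_at X b) k = (if k = b then snd X b + 1 else snd X k)"
  by (simp_all add: f_at_def)

lemma y_shift_f_at_other: "k \<noteq> b \<Longrightarrow> k \<noteq> b + 1 \<Longrightarrow> y_shift (f_at X b) k = y_shift X k"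
  by (auto simp: y_shift_def f_at_snd)

lemma z_match_f_at_other: "k \<noteq> b \<Longrightarrow> k \<noteq> b + 1 \<Longrightarrow> z_match (f_at X b) k = z_match X k"
  by (auto simp: z_match_def f_at_fst y_shift_f_at_other)

lemma x_transfer_f_at_other:
  "k \<noteq> b \<Longrightarrow> k \<noteq> b + 1 \<Longrightarrow> k \<noteq> b + 2 \<Longrightarrow> x_transfer (f_at X b) k = x_transfer X k"
  by (auto simp: x_transfer_def f_at_fst z_match_f_at_other)

lemma f_at_unchanged_near:
  "x_transfer (f_at X b) (b - 1) = x_transfer X (b - 1)"
  "x_transfer (f_at X b) (b + 3) = x_transfer X (b + 3)"
  "z_match (f_at X b) (b - 1) = z_match X (b - 1)"
  "z_match (f_at X b) (b + 2) = z_match X (b + 2)"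
  "y_shift (f_at X b) (b + 2) = y_shift X (b + 2)"
  by (simp_all add: x_transfer_f_at_other z_match_f_at_other y_shift_f_at_other)

lemma Fmap_f_at_eqI:
  assumes X': "X' = f_at X b" and k1: "k1 \<in> {b, b + 1, b + 2}"
    and fst_near: "\<forall>i\<in>{0, 1, 2, 3}. fst (Fmap X') (b + i) = fst (f_at (Fmap X) k1) (b + i)"
    and snd_near: "\<forall>i\<in>{0, 1, 2}. snd (Fmap X') (b + i) = snd (f_at (Fmap X) k1) (b + i)"
  shows "Fmap X' = f_at (Fmap X) k1"
proof -
  have "fst (Fmap X') k = fst (f_at (Fmap X) k1) k" for k
  proof (cases "k - b \<in> {0, 1, 2, 3}")
    case True
    then show ?thesis using fst_near[rule_format, of "k - b"] by simp
  next
    case False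
    then have "x_transfer X' k = x_transfer X k" "x_transfer X' (k - 1) = x_transfer X (k - 1)"
      unfolding X' by (auto intro!: x_transfer_f_at_other)
    moreover have "k \<noteq> k1" using False k1 by auto
    ultimately show ?thesis by (simp add: Fmap_fst f_at_fst)
  qed
  moreover have "snd (Fmap X') k = snd (f_at (Fmap X) k1) k" for k
  proof (cases "k - b \<in> {0, 1, 2}")
    case True
    then show ?thesis using snd_near[rule_format, of "k - b"] by simp
  next
    case False
    then have "y_shift X' k = y_shift X k" "z_match X' k = z_match X k"
      "z_match X' (k - 1) = z_match X (k - 1)"
      unfolding X' by (auto intro!: y_shift_f_at_other z_match_f_at_other)
    moreover have "k \<noteq> k1" using False k1 by auto
    ultimately show ?thesis by (simp add: Fmap_snd f_at_snd)
  qed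
  ultimately show ?thesis by (simp add: prod_eq_iff fun_eq_iff)
qed

lemma succ_mod2_div2_even: "(n::nat) mod 2 = 0 \<Longrightarrow> (n + 1) mod 2 = 1 \<and> (n + 1) div 2 = n div 2"
  by presburger

lemma succ_mod2_div2_odd: "(n::nat) mod 2 = 1 \<Longrightarrow> (n + 1) mod 2 = 0 \<and> (n + 1) div 2 = n div 2 + 1"
  by presburger

lemma Fmap_f_at_even_tight:
  assumes C1: "snd X (b - 1) < fst X b"
    and C2: "snd X (b - 2) + snd X (b - 1) < fst X (b - 1) + fst X b"
    and even: "snd X b mod 2 = 0" and tight: "fst X b = y_shift X b + 1"
  shows "Fmap (f_at X b) = f_at (Fmap X) b"
    and "pot_correction X b = int (fst X b) - int (snd X (b - 1))"
proof -
  define X' where "X' = f_at X b"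
  have y0': "y_shift X' b = y_shift X b + 1"
    using succ_mod2_div2_even[OF even] even by (simp add: X'_def y_shift_def f_at_snd)
  have y1': "y_shift X' (b + 1) = y_shift X (b + 1)"
    using succ_mod2_div2_even[OF even] by (simp add: X'_def y_shift_def f_at_snd)
  have z1': "z_match X' (b + 1) = z_match X (b + 1)"
    using y1' by (simp add: X'_def z_match_def f_at_fst)
  have z0: "z_match X b = fst X b - 1" using tight by (simp add: z_match_def)
  have z0': "z_match X' b = z_match X b"
    using tight y0' z0 by (simp add: X'_def z_match_def f_at_fst)
  note near = f_at_unchanged_near[of X b, folded X'_def]
  have ym1: "snd X (b - 1) mod 2 = 0"
    using tight C1 even mult_div_mod_eq[of 2 "snd X (b - 1)"] unfolding y_shift_def by linarith
  have zm1: "z_match X (b - 1) = 2 * (snd X (b - 2) div 2)"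
  proof -
    have "snd X (b - 2) \<le> fst X (b - 1)"
      using C2 tight C1 even ym1 mult_div_mod_eq[of 2 "snd X (b - 1)"]
      unfolding y_shift_def by linarith
    moreover have "2 * (snd X (b - 2) div 2) \<le> snd X (b - 2)" by simp
    ultimately show ?thesis using ym1 by (simp add: z_match_def y_shift_def algebra_simps)
  qed
  have x0: "x_transfer X b = 2 * (snd X (b - 2) div 2) + 1"
    using z0 zm1 C1 by (simp add: x_transfer_def)
  have x0': "x_transfer X' b = 2 * (snd X (b - 2) div 2)"
    using z0' z0 near(3) zm1 C1 by (simp add: x_transfer_def X'_def f_at_fst)
  have x1': "x_transfer X' (b + 1) = x_transfer X (b + 1)"
    using z1' z0' by (simp add: x_transfer_def X'_def f_at_fst)
  have x2': "x_transfer X' (b + 2) = x_transfer X (b + 2)"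
    using z1' near(4) by (simp add: x_transfer_def X'_def f_at_fst add.commute)
  have "Fmap X' = f_at (Fmap X) b"
    by (rule Fmap_f_at_eqI[OF X'_def])
      (use x0 x0' x1' x2' near y0' y1' z0' z1' z0 tight in
        \<open>simp_all add: Fmap_fst Fmap_snd f_at_fst f_at_snd add.commute\<close>)
  then show "Fmap (f_at X b) = f_at (Fmap X) b" unfolding X'_def .
  show "pot_correction X b = int (fst X b) - int (snd X (b - 1))"
    using x0 ym1 tight even mult_div_mod_eq[of 2 "snd X (b - 1)"]
    unfolding pot_correction_def y_shift_def by simp
qed

lemma Fmap_f_at_even_slack:
  assumes C1: "snd X (b - 1) < fst X b" and C3: "fst X (b + 1) \<le> snd X b"
    and even: "snd X b mod 2 = 0" and slack: "y_shift X b + 2 \<le> fst X b"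
  shows "Fmap (f_at X b) = f_at (Fmap X) (b + 1)"
    and "pot_correction X b < int (fst X b) - int (snd X (b - 1))"
    and "pot_correction X (b + 1) = 0"
proof -
  define X' where "X' = f_at X b"
  have y0': "y_shift X' b = y_shift X b + 1"
    using succ_mod2_div2_even[OF even] even by (simp add: X'_def y_shift_def f_at_snd)
  have y1': "y_shift X' (b + 1) = y_shift X (b + 1)"
    using succ_mod2_div2_even[OF even] by (simp add: X'_def y_shift_def f_at_snd)
  have z1': "z_match X' (b + 1) = z_match X (b + 1)"
    using y1' by (simp add: X'_def z_match_def f_at_fst)
  have z0: "z_match X b = y_shift X b" using slack by (simp add: z_match_def)
  have z0': "z_match X' b = z_match X b + 1"
    using slack y0' z0 by (simp add: X'_def z_match_def f_at_fst)
  note near = f_at_unchanged_near[of X b, folded X'_def]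
  have z1: "z_match X (b + 1) = fst X (b + 1)"
    using C3 even mult_div_mod_eq[of 2 "snd X b"] by (simp add: z_match_def y_shift_def)
  have y0: "y_shift X b = 2 * (snd X (b - 1) div 2)" using even by (simp add: y_shift_def)
  have x1: "x_transfer X (b + 1) = 2 * (snd X (b - 1) div 2)"
    using z1 z0 y0 by (simp add: x_transfer_def)
  have x1': "x_transfer X' (b + 1) = 2 * (snd X (b - 1) div 2) + 1"
    using z1 z1' z0' z0 y0 by (simp add: x_transfer_def X'_def f_at_fst)
  have x0: "x_transfer X b = x_transfer X' b + 2"
    using z0' z0 near(3) slack by (simp add: x_transfer_def X'_def f_at_fst)
  have x2': "x_transfer X' (b + 2) = x_transfer X (b + 2)"
    using z1' near(4) by (simp add: x_transfer_def X'_def f_at_fst add.commute)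
  have "Fmap X' = f_at (Fmap X) (b + 1)"
    by (rule Fmap_f_at_eqI[OF X'_def])
      (use x0 x1 x1' x2' y0' y1' z0' z1' z0 near in
        \<open>simp_all add: Fmap_fst Fmap_snd f_at_fst f_at_snd add.commute\<close>)
  then show "Fmap (f_at X b) = f_at (Fmap X) (b + 1)" unfolding X'_def .
  show "pot_correction X b < int (fst X b) - int (snd X (b - 1))"
    using slack y0 mult_div_mod_eq[of 2 "snd X (b - 1)"] mod_less_divisor[of 2 "x_transfer X b"]
    unfolding pot_correction_def by linarith
  show "pot_correction X (b + 1) = 0" using x1 even unfolding pot_correction_def by simp
qed

lemma Fmap_f_at_odd:
  assumes C1: "snd X (b - 1) < fst X b" and C3: "fst X (b + 1) \<le> snd X b"
    and odd: "snd X b mod 2 = 1"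
    and no_carry: "\<not> (snd X (b + 1) mod 2 = 0 \<and> fst X (b + 1) = snd X b)"
  shows "Fmap (f_at X b) = f_at (Fmap X) (b + 1)" and "pot_correction X (b + 1) = 0"
proof -
  define X' where "X' = f_at X b"
  define q where "q = snd X (b - 1) div 2"
  have y0: "y_shift X b = 2 * q + 1" using odd by (simp add: y_shift_def q_def)
  have y0': "y_shift X' b = 2 * q"
    using succ_mod2_div2_odd[OF odd] by (simp add: X'_def y_shift_def f_at_snd q_def)
  have y1': "y_shift X' (b + 1) = y_shift X (b + 1) + 2"
    using succ_mod2_div2_odd[OF odd] by (simp add: X'_def y_shift_def f_at_snd)
  have z0: "z_match X b = 2 * q + 1"
    using C1 y0 mult_div_mod_eq[of 2 "snd X (b - 1)"] by (simp add: z_match_def q_def)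
  have z0': "z_match X' b = 2 * q"
    using C1 y0' mult_div_mod_eq[of 2 "snd X (b - 1)"]
    by (simp add: X'_def z_match_def f_at_fst q_def)
  note near = f_at_unchanged_near[of X b, folded X'_def]
  have le1: "fst X (b + 1) \<le> y_shift X (b + 1)"
    using C3 no_carry odd mult_div_mod_eq[of 2 "snd X b"] mult_div_mod_eq[of 2 "snd X (b + 1)"]
      mod_less_divisor[of 2 "snd X (b + 1)"]
    unfolding y_shift_def by simp linarith
  then have z1: "z_match X (b + 1) = fst X (b + 1)" by (simp add: z_match_def)
  have z1': "z_match X' (b + 1) = fst X (b + 1)"
    using le1 y1' by (simp add: X'_def z_match_def f_at_fst)
  have x0': "x_transfer X' b = x_transfer X b"
    using z0' z0 near(3) C1 by (simp add: x_transfer_def X'_def f_at_fst)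
  have x1: "x_transfer X (b + 1) = 2 * q + 1" using z1 z0 by (simp add: x_transfer_def)
  have x1': "x_transfer X' (b + 1) = 2 * q"
    using z1' z0' by (simp add: x_transfer_def X'_def f_at_fst)
  have x2': "x_transfer X' (b + 2) = x_transfer X (b + 2)"
    using z1' z1 near(4) by (simp add: x_transfer_def X'_def f_at_fst add.commute)
  have "Fmap X' = f_at (Fmap X) (b + 1)"
    by (rule Fmap_f_at_eqI[OF X'_def])
      (use x0' x1 x1' x2' y0' y1' z0' z1' z0 z1 le1 y0 near in
        \<open>simp_all add: Fmap_fst Fmap_snd f_at_fst f_at_snd add.commute\<close>)
  then show "Fmap (f_at X b) = f_at (Fmap X) (b + 1)" unfolding X'_def .
  show "pot_correction X (b + 1) = 0" using x1 odd unfolding pot_correction_def by simp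
qed

lemma Fmap_f_at_odd_carry:
  assumes C1: "snd X (b - 1) < fst X b"
    and C4: "fst X (b + 1) + fst X (b + 2) \<le> snd X b + snd X (b + 1)"
    and odd: "snd X b mod 2 = 1"
    and carry: "snd X (b + 1) mod 2 = 0" "fst X (b + 1) = snd X b"
  shows "Fmap (f_at X b) = f_at (Fmap X) (b + 2)" and "pot_correction X (b + 1) < 0"
    and "pot_correction X (b + 2) = int (snd X b) - int (fst X (b + 1))"
proof -
  define X' where "X' = f_at X b"
  define q where "q = snd X (b - 1) div 2"
  define p where "p = snd X b div 2"
  have yb: "snd X b = 2 * p + 1" using odd mult_div_mod_eq[of 2 "snd X b"] p_def by simp
  have y0: "y_shift X b = 2 * q + 1" using odd by (simp add: y_shift_def q_def)
  have y0': "y_shift X' b = 2 * q"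
    using succ_mod2_div2_odd[OF odd] by (simp add: X'_def y_shift_def f_at_snd q_def)
  have y1: "y_shift X (b + 1) = 2 * p" using carry(1) by (simp add: y_shift_def p_def)
  have y1': "y_shift X' (b + 1) = 2 * p + 2"
    using succ_mod2_div2_odd[OF odd] carry(1) by (simp add: X'_def y_shift_def f_at_snd p_def)
  have z0: "z_match X b = 2 * q + 1"
    using C1 y0 mult_div_mod_eq[of 2 "snd X (b - 1)"] by (simp add: z_match_def q_def)
  have z0': "z_match X' b = 2 * q"
    using C1 y0' mult_div_mod_eq[of 2 "snd X (b - 1)"]
    by (simp add: X'_def z_match_def f_at_fst q_def)
  note near = f_at_unchanged_near[of X b, folded X'_def]
  have z1: "z_match X (b + 1) = 2 * p" using y1 carry(2) yb by (simp add: z_match_def)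
  have z1': "z_match X' (b + 1) = 2 * p + 1"
    using y1' carry(2) yb by (simp add: X'_def z_match_def f_at_fst)
  have z2: "z_match X (b + 2) = fst X (b + 2)"
  proof -
    have "b + 2 - 1 = b + 1" by simp
    then have "fst X (b + 2) \<le> y_shift X (b + 2)"
      using C4 carry mult_div_mod_eq[of 2 "snd X (b + 1)"] unfolding y_shift_def by (simp only:)
    then show ?thesis by (simp add: z_match_def)
  qed
  have x0': "x_transfer X' b = x_transfer X b"
    using z0' z0 near(3) C1 by (simp add: x_transfer_def X'_def f_at_fst)
  have x1: "x_transfer X (b + 1) = 2 * q + 2" using z1 z0 carry(2) yb by (simp add: x_transfer_def)
  have x1': "x_transfer X' (b + 1) = 2 * q"
    using z1' z0' carry(2) yb by (simp add: x_transfer_def X'_def f_at_fst)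
  have x2: "x_transfer X (b + 2) = 2 * p" using z2 z1 by (simp add: x_transfer_def add.commute)
  have x2': "x_transfer X' (b + 2) = 2 * p + 1"
    using z2 z1' near(4) by (simp add: x_transfer_def X'_def f_at_fst add.commute)
  have "Fmap X' = f_at (Fmap X) (b + 2)"
    by (rule Fmap_f_at_eqI[OF X'_def])
      (use x0' x1 x1' x2 x2' y0' y1' z0' z1' z0 z1 y0 y1 near in
        \<open>simp_all add: Fmap_fst Fmap_snd f_at_fst f_at_snd add.commute\<close>)
  then show "Fmap (f_at X b) = f_at (Fmap X) (b + 2)" unfolding X'_def .
  show "pot_correction X (b + 1) < 0" using x1 odd unfolding pot_correction_def by simp
  show "pot_correction X (b + 2) = int (snd X b) - int (fst X (b + 1))"
    using x2 carry unfolding pot_correction_def by (simp add: add.commute)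
qed

lemma pot_correction_lt_if_odd:
  assumes C1: "snd X (b - 1) < fst X b"
    and C2: "snd X (b - 2) + snd X (b - 1) < fst X (b - 1) + fst X b"
    and odd: "snd X b mod 2 = 1"
  shows "pot_correction X b < int (fst X b) - int (snd X (b - 1))"
proof (cases "fst X b = snd X (b - 1) + 1 \<and> snd X (b - 1) mod 2 = 0")
  case True
  then have "y_shift X b = fst X b"
    using odd mult_div_mod_eq[of 2 "snd X (b - 1)"] by (simp add: y_shift_def)
  then have "z_match X b = fst X b" by (simp add: z_match_def)
  moreover have "z_match X (b - 1) = 2 * (snd X (b - 2) div 2)"
  proof -
    have "snd X (b - 2) \<le> fst X (b - 1)" using C2 True by linarith
    moreover have "2 * (snd X (b - 2) div 2) \<le> snd X (b - 2)" by simp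
    ultimately show ?thesis unfolding z_match_def y_shift_def using True by simp
  qed
  ultimately have "x_transfer X b mod 2 = 0" by (simp add: x_transfer_def)
  then show ?thesis using True unfolding pot_correction_def by simp
next
  case False
  then have "2 \<le> int (fst X b) - int (snd X (b - 1)) \<or> snd X (b - 1) mod 2 = 1"
    using C1 by presburger
  then show ?thesis
    using C1 mod_less_divisor[of 2 "x_transfer X b"] unfolding pot_correction_def by linarith
qed

lemma least_argmax_local_conditions:
  assumes lo: "vanishes_below lo X" and b: "least_argmax (potential lo X) b"
  shows "snd X (b - 1) < fst X b"
    and "snd X (b - 2) + snd X (b - 1) < fst X (b - 1) + fst X b"
    and "fst X (b + 1) \<le> snd X b"
    and "fst X (b + 1) + fst X (b + 2) \<le> snd X b + snd X (b + 1)"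
proof -
  let ?P = "potential lo X"
  have "?P (b - 1) < ?P b" "?P (b - 2) < ?P b" "?P (b + 1) \<le> ?P b" "?P (b + 2) \<le> ?P b"
    using b unfolding least_argmax_def by simp_all
  moreover have "?P b = ?P (b - 1) + int (fst X b) - int (snd X (b - 1))"
    and "?P (b - 1) = ?P (b - 2) + int (fst X (b - 1)) - int (snd X (b - 2))"
    and "?P (b + 1) = ?P b + int (fst X (b + 1)) - int (snd X b)"
    and "?P (b + 2) = ?P (b + 1) + int (fst X (b + 2)) - int (snd X (b + 1))"
    using potential_succ[OF lo, of "b - 1"] potential_succ[OF lo, of "b - 2"]
      potential_succ[OF lo, of b] potential_succ[OF lo, of "b + 1"]
    by (simp_all add: algebra_simps)
  ultimately show "snd X (b - 1) < fst X b"
    and "snd X (b - 2) + snd X (b - 1) < fst X (b - 1) + fst X b"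
    and "fst X (b + 1) \<le> snd X b"
    and "fst X (b + 1) + fst X (b + 2) \<le> snd X b + snd X (b + 1)"
    by linarith+
qed

text \<open>As the potential of F X at j is at most the maximum of the potential of X over
  j - 2, j - 1, j, it stays below P(b) left of b and never exceeds P(b); only the indices
  from b to k1 need a separate check.\<close>

lemma least_argmax_potential_FmapI:
  assumes lo: "vanishes_below lo X" and b: "least_argmax (potential lo X) b"
    and at_k1: "potential lo (Fmap X) k1 = potential lo X b"
    and before_k1: "\<And>j. b \<le> j \<Longrightarrow> j < k1 \<Longrightarrow> potential lo (Fmap X) j < potential lo X b"
  shows "least_argmax (potential lo (Fmap X)) k1"
proof -
  have le: "potential lo X j \<le> potential lo X b" for j
    using b unfolding least_argmax_def by (cases j b rule: linorder_cases) auto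
  have lt: "potential lo X j < potential lo X b" if "j < b" for j
    using b that unfolding least_argmax_def by blast
  show ?thesis
    unfolding least_argmax_def
  proof (intro conjI allI impI)
    fix j assume "j < k1"
    show "potential lo (Fmap X) j < potential lo (Fmap X) k1"
    proof (cases "j < b")
      case True
      then show ?thesis
        using potential_Fmap_le_max[OF lo, of j] lt[of j] lt[of "j - 1"] lt[of "j - 2"] at_k1
        by simp
    qed (use \<open>j < k1\<close> before_k1 at_k1 in simp)
  next
    fix j assume "k1 < j"
    show "potential lo (Fmap X) j \<le> potential lo (Fmap X) k1"
      using potential_Fmap_le_max[OF lo, of j] le[of j] le[of "j - 1"] le[of "j - 2"] at_k1 by simp
  qed
qed

lemma Fmap_f_at_least_argmax_even:
  assumes lo: "vanishes_below lo X" and b: "least_argmax (potential lo X) b"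
    and even: "snd X b mod 2 = 0"
  obtains k1 where "Fmap (f_at X b) = f_at (Fmap X) k1"
    and "least_argmax (potential lo (Fmap X)) k1"
proof -
  note C = least_argmax_local_conditions[OF lo b]
  note argmaxI = least_argmax_potential_FmapI[OF lo b]
  have PF: "potential lo (Fmap X) k = potential lo X (k - 1) + pot_correction X k" for k
    using potential_Fmap[OF lo] .
  have P0: "potential lo X (b - 1) = potential lo X b - int (fst X b) + int (snd X (b - 1))"
    using potential_succ[OF lo, of "b - 1"] by simp
  have "y_shift X b \<le> snd X (b - 1)"
    using even mult_div_mod_eq[of 2 "snd X (b - 1)"] unfolding y_shift_def by linarith
  then consider (tight) "fst X b = y_shift X b + 1" | (slack) "y_shift X b + 2 \<le> fst X b"
    using C(1) by linarith
  then show thesis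
  proof cases
    case tight
    note r = Fmap_f_at_even_tight[OF C(1,2) even tight]
    have "least_argmax (potential lo (Fmap X)) b" by (rule argmaxI) (use PF r(2) P0 in simp_all)
    then show thesis using that r(1) by blast
  next
    case slack
    note r = Fmap_f_at_even_slack[OF C(1,3) even slack]
    have "least_argmax (potential lo (Fmap X)) (b + 1)"
      by (rule argmaxI) (use PF r(2,3) P0 in \<open>simp_all add: le_less\<close>)
    then show thesis using that r(1) by blast
  qed
qed

lemma Fmap_f_at_least_argmax_odd:
  assumes lo: "vanishes_below lo X" and b: "least_argmax (potential lo X) b"
    and odd: "snd X b mod 2 = 1"
  obtains k1 where "Fmap (f_at X b) = f_at (Fmap X) k1"
    and "least_argmax (potential lo (Fmap X)) k1"
proof -
  note C = least_argmax_local_conditions[OF lo b]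
  note argmaxI = least_argmax_potential_FmapI[OF lo b]
  have PF: "potential lo (Fmap X) k = potential lo X (k - 1) + pot_correction X k" for k
    using potential_Fmap[OF lo] .
  have P0: "potential lo X (b - 1) = potential lo X b - int (fst X b) + int (snd X (b - 1))"
    and P1: "potential lo X (b + 1) = potential lo X b + int (fst X (b + 1)) - int (snd X b)"
    using potential_succ[OF lo, of "b - 1"] potential_succ[OF lo, of b] by simp_all
  have cb: "pot_correction X b < int (fst X b) - int (snd X (b - 1))"
    using pot_correction_lt_if_odd[OF C(1,2) odd] .
  show thesis
  proof (cases "snd X (b + 1) mod 2 = 0 \<and> fst X (b + 1) = snd X b")
    case True
    note r = Fmap_f_at_odd_carry[OF C(1,4) odd conjunct1[OF True] conjunct2[OF True]]
    have "least_argmax (potential lo (Fmap X)) (b + 2)"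
    proof (rule argmaxI)
      have "b + 2 - 1 = b + 1" by simp
      then show "potential lo (Fmap X) (b + 2) = potential lo X b"
        using PF[of "b + 2"] r(3) P1 by (simp only:)
      fix j assume "b \<le> j" "j < b + 2"
      then consider "j = b" | "j = b + 1" by linarith
      then show "potential lo (Fmap X) j < potential lo X b"
        by cases (use PF r(2) P0 cb in simp_all)
    qed
    then show thesis using that r(1) by blast
  next
    case False
    note r = Fmap_f_at_odd[OF C(1,3) odd False]
    have "least_argmax (potential lo (Fmap X)) (b + 1)"
      by (rule argmaxI) (use PF r(2) P0 cb in \<open>simp_all add: le_less\<close>)
    then show thesis using that r(1) by blast
  qed
qed

lemma Fmap_f_at_least_argmax:
  assumes "vanishes_below lo X" and "least_argmax (potential lo X) b"
  obtains k1 where "Fmap (f_at X b) = f_at (Fmap X) k1"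
    and "least_argmax (potential lo (Fmap X)) k1"
proof (cases "snd X b mod 2 = 0")
  case True
  show thesis by (rule Fmap_f_at_least_argmax_even[OF assms True]) (rule that)
next
  case False
  then have "snd X b mod 2 = 1" by presburger
  then show thesis by (rule Fmap_f_at_least_argmax_odd[OF assms]) (rule that)
qed

theorem mainTheorem8:
  fixes X :: array2
  assumes "two_rowed X" and "reduced_array X"
  shows "map_option Fmap (ftilde X) = ftilde (Fmap X)"
proof -
  obtain lo where lo: "vanishes_below lo X" using vanishes_below_exists[OF assms(1)] .
  have FX: "two_rowed (Fmap X)" "vanishes_below lo (Fmap X)"
    using two_rowed_Fmap[OF assms(1)] vanishes_below_Fmap[OF lo] .
  from ftilde_cases_potential[OF assms(1) lo] show ?thesis
  proof
    assume "\<exists>b. least_argmax (potential lo X) b \<and> ftilde X = Some (f_at X b)"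
    then obtain b where b: "least_argmax (potential lo X) b" "ftilde X = Some (f_at X b)" by blast
    obtain k1 where "Fmap (f_at X b) = f_at (Fmap X) k1" "least_argmax (potential lo (Fmap X)) k1"
      using Fmap_f_at_least_argmax[OF lo b(1)] .
    then show ?thesis using b(2) ftilde_eq_Some_if_least_argmax[OF FX] by simp
  next
    assume X0: "ftilde X = None \<and> (\<forall>j. potential lo X j \<le> 0)"
    then have "potential lo (Fmap X) j \<le> 0" for j
      using potential_Fmap_le_max[OF lo, of j] by (meson max.bounded_iff order_trans)
    then show ?thesis using X0 ftilde_eq_None_if_nonpos[OF FX] by simp
  qed
qed

end
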